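(* Let $\mathbb{Z}$ be a finite-dimensional Euclidean space, $L>0$, $G:\mathbb{Z}\to\mathbb{Z}$ $\frac1L$-co-coercive with a zero $z^*$ ($G(z^* )=0$). Let $\gamma_k\ge0$ be such that $\sum_{k\ge0}(k+1)^2\gamma_k^2<\infty$. Let $\{z^k\}$ be generated from $z^0\in\mathbb{Z}$ by: for $k\ge 0$, choose $\tilde z^k$ with $\|G(z^k)-\tilde z^k\|\le\gamma_k$ and set $z^{k+1}=\beta_k z^0+(1-\beta_k)z^k-\eta_k\tilde z^k$ with $\beta_k=1/(k+2)$, $\eta_k=(1-\beta_k)/L$. Then $\|G(z^k)\|\le O(k^{-1})$ and $\|z^{k+1}-z^k\|\le O(k^{-1})$ for $k\ge0$; i.e., there is a constant $C>0$ independent of $k$ with $\|G(z^k)\|\le C/(k+1)$ and $\|z^{k+1}-z^k\|\le C/(k+1)$ for all $k\ge0$.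
   Context: A map $G:\mathbb{Z}\to\mathbb{Z}$ is $c$-co-coercive if $\langle G(x_1)-G(x_2),x_1-x_2\rangle\ge c\|G(x_1)-G(x_2)\|^2$ for all $x_1,x_2$. *)

theory Defs
  imports "HOL-Analysis.Analysis"
begin

definition co_coercive :: "real \<Rightarrow> ('a::real_inner \<Rightarrow> 'a) \<Rightarrow> bool" where
  "co_coercive c G \<longleftrightarrow>
     (\<forall>x1 x2. inner (G x1 - G x2) (x1 - x2) \<ge> c * (norm (G x1 - G x2))\<^sup>2)"

end

theory Submission
  imports Defs
begin

text \<open>
  Rescale to the firmly nonexpansive operator \<open>F = G / L\<close>; the error \<open>e\<^sub>k\<close> in evaluating
  \<open>F\<close> is then bounded by \<open>\<delta>\<^sub>k = \<gamma>\<^sub>k / L\<close>. Along the exact Halpern iteration the Lyapunov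
  function \<open>W\<^sub>k = k(k+1)/2 \<parallel>F z\<^sub>k\<parallel>\<^sup>2 + (k+1) \<langle>F z\<^sub>k, z\<^sub>k - z\<^sub>0\<rangle>\<close> does not increase; along
  the inexact one it increases by at most \<open>(k+1)(k+2)/2 \<delta>\<^sub>k\<^sup>2 + (k+1) \<delta>\<^sub>k \<parallel>F z\<^sub>k\<parallel>\<close>.
  Co-coercivity at the zero \<open>z\<^sup>*\<close> bounds \<open>W\<^sub>k\<close> from below by \<open>x\<^sub>k\<^sup>2/2 - D x\<^sub>k\<close>, where
  \<open>x\<^sub>k = (k+1) \<parallel>F z\<^sub>k\<parallel>\<close> and \<open>D = \<parallel>z\<^sub>0 - z\<^sup>*\<parallel>\<close>. Hence
  \<open>x\<^sub>k\<^sup>2/2 \<le> D x\<^sub>k + S + (\<Sum>j<k. \<delta>\<^sub>j x\<^sub>j)\<close> with \<open>S = \<Sum>j. (j+1)\<^sup>2 \<delta>\<^sub>j\<^sup>2\<close>, and since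
  \<open>\<Sum>j. \<delta>\<^sub>j < \<infinity>\<close> (by AM-GM) this bootstraps to a uniform bound on \<open>x\<^sub>k\<close>. The step length
  then follows from \<open>(k+2)(z\<^sub>k\<^sub>+\<^sub>1 - z\<^sub>k) = z\<^sub>0 - z\<^sub>k - (k+1)(F z\<^sub>k + e\<^sub>k)\<close> and the bound
  \<open>\<parallel>z\<^sub>k - z\<^sup>*\<parallel> \<le> D + (\<Sum>j<k. \<delta>\<^sub>j)\<close>, which holds because \<open>I - F\<close> is nonexpansive.
\<close>

lemma co_coercive_scaleR:
  assumes "co_coercive c G" and "a > 0"
  shows "co_coercive (c / a) (\<lambda>x. a *\<^sub>R G x)"
  unfolding co_coercive_def
proof (intro allI)
  fix x y
  have "c * (norm (G x - G y))\<^sup>2 \<le> inner (G x - G y) (x - y)"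
    using assms(1) unfolding co_coercive_def by blast
  then have "a * (c * (norm (G x - G y))\<^sup>2) \<le> a * inner (G x - G y) (x - y)"
    using assms(2) by simp
  moreover have "norm (a *\<^sub>R G x - a *\<^sub>R G y) = a * norm (G x - G y)"
    using assms(2) by (simp flip: scaleR_diff_right)
  ultimately show "c / a * (norm (a *\<^sub>R G x - a *\<^sub>R G y))\<^sup>2 \<le> inner (a *\<^sub>R G x - a *\<^sub>R G y) (x - y)"
    using assms(2) by (simp add: power2_eq_square flip: scaleR_diff_right)
qed

lemma co_coercive_id_minus_nonexpansive:
  assumes "co_coercive c F" and "c \<ge> 1 / 2"
  shows "norm ((x - F x) - (y - F y)) \<le> norm (x - y)"
proof -
  have coco: "c * (norm (F x - F y))\<^sup>2 \<le> inner (F x - F y) (x - y)"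
    using assms(1) unfolding co_coercive_def by blast
  have slack: "(1 - 2 * c) * (norm (F x - F y))\<^sup>2 \<le> 0"
    using assms(2) by (intro mult_nonpos_nonneg) auto
  have "(norm ((x - F x) - (y - F y)))\<^sup>2
      = (norm (x - y))\<^sup>2 - 2 * inner (F x - F y) (x - y) + (norm (F x - F y))\<^sup>2"
    by (simp add: power2_norm_eq_inner inner_diff_left inner_diff_right inner_commute)
  also have "\<dots> \<le> (norm (x - y))\<^sup>2"
    using coco slack by (simp add: algebra_simps)
  finally show ?thesis
    by (rule power2_le_imp_le) simp
qed

lemma summable_of_summable_weighted_square:
  fixes \<delta> :: "nat \<Rightarrow> real"
  assumes "\<And>k. \<delta> k \<ge> 0" and "summable (\<lambda>k. (real k + 1)\<^sup>2 * (\<delta> k)\<^sup>2)"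
  shows "summable \<delta>"
proof (rule summable_comparison_test')
  have "summable (\<lambda>k. inverse (real (Suc k) ^ 2))"
    using inverse_power_summable[of 2, where 'a = real] by (subst summable_Suc_iff) simp
  then have "summable (\<lambda>k. 1 / (real k + 1)\<^sup>2)"
    by (simp add: inverse_eq_divide add.commute)
  then show "summable (\<lambda>k. ((real k + 1)\<^sup>2 * (\<delta> k)\<^sup>2 + 1 / (real k + 1)\<^sup>2) / 2)"
    using assms(2) by (intro summable_divide summable_add)
  fix k
  have "0 \<le> ((real k + 1) * \<delta> k - 1 / (real k + 1))\<^sup>2"
    by simp
  also have "\<dots> = (real k + 1)\<^sup>2 * (\<delta> k)\<^sup>2 + 1 / (real k + 1)\<^sup>2
                   - 2 * ((real k + 1) * \<delta> k) * (1 / (real k + 1))"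
    by (simp add: power2_diff power_mult_distrib power_divide)
  also have "2 * ((real k + 1) * \<delta> k) * (1 / (real k + 1)) = 2 * \<delta> k"
    by simp
  finally show "norm (\<delta> k) \<le> ((real k + 1)\<^sup>2 * (\<delta> k)\<^sup>2 + 1 / (real k + 1)\<^sup>2) / 2"
    using assms(1)[of k] by simp
qed

lemma quadratic_recursive_bound:
  fixes x \<delta> :: "nat \<Rightarrow> real"
  assumes \<delta>_nonneg: "\<And>k. \<delta> k \<ge> 0"
    and \<delta>_sum: "\<And>k. (\<Sum>j<k. \<delta> j) \<le> E"
    and "D \<ge> 0" and "S \<ge> 0"
    and quadratic: "\<And>k. (x k)\<^sup>2 / 2 - D * x k \<le> S + (\<Sum>j<k. \<delta> j * x j)"
  shows "x k \<le> 2 * (D + E + S + 1)"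
proof (induction k rule: less_induct)
  case (less k)
  define M where "M = 2 * (D + E + S + 1)"
  have "E \<ge> 0"
    using \<delta>_sum[of 0] by simp
  then have "M \<ge> 2"
    using \<open>D \<ge> 0\<close> \<open>S \<ge> 0\<close> by (simp add: M_def)
  have "(\<Sum>j<k. \<delta> j * x j) \<le> (\<Sum>j<k. \<delta> j * M)"
    using less \<delta>_nonneg by (intro sum_mono mult_left_mono) (auto simp: M_def)
  also have "\<dots> \<le> E * M"
    using \<delta>_sum[of k] \<open>M \<ge> 2\<close> by (simp flip: sum_distrib_right)
  finally have "(x k)\<^sup>2 / 2 \<le> D * x k + S + E * M"
    using quadratic[of k] by linarith
  show "x k \<le> M"
  proof (rule ccontr)
    assume "\<not> x k \<le> M"
    then have "M * x k < (x k)\<^sup>2"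
      using \<open>M \<ge> 2\<close> by (simp add: power2_eq_square mult_strict_right_mono)
    moreover have "M * x k = 2 * (D * x k) + 2 * (x k * (E + S + 1))"
      by (simp add: M_def algebra_simps)
    moreover have "E * M + M * S + M \<le> x k * (E + S + 1)"
      using \<open>\<not> x k \<le> M\<close> \<open>E \<ge> 0\<close> \<open>S \<ge> 0\<close> mult_right_mono[of M "x k" "E + S + 1"]
      by (simp add: algebra_simps)
    moreover have "S \<le> M * S"
      using \<open>M \<ge> 2\<close> \<open>S \<ge> 0\<close> by (simp add: mult_right_mono[of 1 M S, simplified])
    ultimately show False
      using \<open>(x k)\<^sup>2 / 2 \<le> D * x k + S + E * M\<close> \<open>M \<ge> 2\<close> by linarith
  qed
qed

text \<open>
  In the application \<open>n = k + 1\<close>, \<open>a = F z\<^sub>k\<close>, \<open>b = F z\<^sub>k\<^sub>+\<^sub>1\<close>, \<open>v = z\<^sub>k\<^sub>+\<^sub>1 - z\<^sub>k\<close>,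
  \<open>w = z\<^sub>k - z\<^sub>0\<close>, error \<open>\<epsilon> = e\<^sub>k\<close>.
\<close>
lemma halpern_potential_identity:
  fixes a b v w \<epsilon> :: "'a::real_inner" and n :: real
  assumes rec: "(n + 1) *\<^sub>R v = - w - n *\<^sub>R (a + \<epsilon>)"
  shows "n * (n + 1) / 2 * (norm b)\<^sup>2 + (n + 1) * inner b (w + v)
       = (n - 1) * n / 2 * (norm a)\<^sup>2 + n * inner a w
         + n * (n + 1) / 2 * (norm \<epsilon>)\<^sup>2 - n * inner a \<epsilon>
         - n * (n + 1) / 2 * (norm (b - a + \<epsilon>))\<^sup>2
         - n * (n + 1) * (inner (b - a) v - (norm (b - a))\<^sup>2)"
proof -
  have w: "w = - ((n + 1) *\<^sub>R v) - n *\<^sub>R (a + \<epsilon>)"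
    unfolding rec by simp
  show ?thesis
    unfolding w power2_norm_eq_inner
    by (simp add: inner_commute algebra_simps) (simp add: field_simps)
qed

lemma halpern_potential_decrease:
  fixes a b v w \<epsilon> :: "'a::real_inner" and n :: real
  assumes "n \<ge> 0"
    and rec: "(n + 1) *\<^sub>R v = - w - n *\<^sub>R (a + \<epsilon>)"
    and coco: "(norm (b - a))\<^sup>2 \<le> inner (b - a) v"
  shows "n * (n + 1) / 2 * (norm b)\<^sup>2 + (n + 1) * inner b (w + v)
       \<le> (n - 1) * n / 2 * (norm a)\<^sup>2 + n * inner a w
         + n * (n + 1) / 2 * (norm \<epsilon>)\<^sup>2 - n * inner a \<epsilon>"
proof -
  have "0 \<le> n * (n + 1) / 2 * (norm (b - a + \<epsilon>))\<^sup>2"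
    and "0 \<le> n * (n + 1) * (inner (b - a) v - (norm (b - a))\<^sup>2)"
    using \<open>n \<ge> 0\<close> coco by simp_all
  then show ?thesis
    unfolding halpern_potential_identity[OF rec] by linarith
qed

locale inexact_halpern =
  fixes F :: "'a::real_inner \<Rightarrow> 'a" and zstar :: 'a
    and z e :: "nat \<Rightarrow> 'a" and \<delta> :: "nat \<Rightarrow> real"
  assumes coco: "co_coercive 1 F"
    and zero: "F zstar = 0"
    and err: "norm (e k) \<le> \<delta> k"
    and err_summable: "summable (\<lambda>k. (real k + 1)\<^sup>2 * (\<delta> k)\<^sup>2)"
    and step: "z (Suc k) = (1 / (real k + 2)) *\<^sub>R z 0
                 + (1 - 1 / (real k + 2)) *\<^sub>R (z k - F (z k) - e k)"
begin

lemma err_nonneg: "\<delta> k \<ge> 0"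
  using err[of k] norm_ge_zero by (rule order_trans[rotated])

lemma firmly_nonexpansive: "(norm (F x - F y))\<^sup>2 \<le> inner (F x - F y) (x - y)"
  using coco unfolding co_coercive_def by simp

lemma scaled_step:
  "(real k + 2) *\<^sub>R (z (Suc k) - z k) = (z 0 - z k) - (real k + 1) *\<^sub>R (F (z k) + e k)"
proof -
  have "(real k + 2) * (1 - 1 / (real k + 2)) = real k + 1"
    by (simp add: field_simps)
  then have "(real k + 2) *\<^sub>R z (Suc k) = z 0 + (real k + 1) *\<^sub>R (z k - F (z k) - e k)"
    by (simp add: step scaleR_add_right)
  then show ?thesis
    by (simp add: scaleR_diff_right algebra_simps scaleR_2)
qed

lemma norm_diff_zero_le: "norm (z k - zstar) \<le> norm (z 0 - zstar) + (\<Sum>j<k. \<delta> j)"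
proof (induction k)
  case 0
  then show ?case by simp
next
  case (Suc k)
  define \<beta> where "\<beta> = 1 / (real k + 2)"
  define R where "R = norm (z 0 - zstar) + (\<Sum>j<Suc k. \<delta> j)"
  define u where "u = (z k - F (z k)) - (zstar - F zstar) - e k"
  have "0 \<le> \<beta>" "\<beta> \<le> 1"
    by (simp_all add: \<beta>_def)
  have "norm (z 0 - zstar) \<le> R"
    using err_nonneg by (simp add: R_def sum_nonneg)
  have "norm u \<le> norm (z k - zstar) + \<delta> k"
    using co_coercive_id_minus_nonexpansive[OF coco, of "z k" zstar] err[of k]
      norm_triangle_ineq4[of "(z k - F (z k)) - (zstar - F zstar)" "e k"]
    by (simp add: u_def)
  then have "norm u \<le> R"
    using Suc.IH by (simp add: R_def)
  have "norm (z (Suc k) - zstar) = norm (\<beta> *\<^sub>R (z 0 - zstar) + (1 - \<beta>) *\<^sub>R u)"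
    by (simp add: step zero \<beta>_def u_def algebra_simps)
  also have "\<dots> \<le> \<beta> * norm (z 0 - zstar) + (1 - \<beta>) * norm u"
    using \<open>0 \<le> \<beta>\<close> \<open>\<beta> \<le> 1\<close> by (intro order_trans[OF norm_triangle_ineq]) simp
  also have "\<dots> \<le> \<beta> * R + (1 - \<beta>) * R"
    using \<open>0 \<le> \<beta>\<close> \<open>\<beta> \<le> 1\<close> \<open>norm (z 0 - zstar) \<le> R\<close> \<open>norm u \<le> R\<close>
    by (intro add_mono mult_left_mono) simp_all
  finally show ?case
    by (simp add: R_def algebra_simps)
qed

definition potential :: "nat \<Rightarrow> real" where
  "potential k = real k * (real k + 1) / 2 * (norm (F (z k)))\<^sup>2
                 + (real k + 1) * inner (F (z k)) (z k - z 0)"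

lemma potential_step:
  "potential (Suc k) \<le> potential k + (real k + 1) * (real k + 2) / 2 * (\<delta> k)\<^sup>2
                        + \<delta> k * ((real k + 1) * norm (F (z k)))"
proof -
  define n where "n = real k + 1"
  have rec: "(n + 1) *\<^sub>R (z (Suc k) - z k) = - (z k - z 0) - n *\<^sub>R (F (z k) + e k)"
    using scaled_step[of k] by (simp add: n_def add.commute add.left_commute)
  have "(norm (e k))\<^sup>2 \<le> (\<delta> k)\<^sup>2"
    using err[of k] by (simp add: power_mono)
  then have err_sq: "n * (n + 1) / 2 * (norm (e k))\<^sup>2 \<le> (real k + 1) * (real k + 2) / 2 * (\<delta> k)\<^sup>2"
    by (simp add: n_def mult_left_mono add.commute add.left_commute)
  have "- inner (F (z k)) (e k) \<le> norm (F (z k)) * norm (e k)"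
    using norm_cauchy_schwarz[of "F (z k)" "- e k"] by simp
  also have "\<dots> \<le> norm (F (z k)) * \<delta> k"
    using err[of k] by (simp add: mult_left_mono)
  finally have "n * (- inner (F (z k)) (e k)) \<le> n * (norm (F (z k)) * \<delta> k)"
    by (rule mult_left_mono) (simp add: n_def)
  then have err_inner: "- (n * inner (F (z k)) (e k)) \<le> \<delta> k * ((real k + 1) * norm (F (z k)))"
    by (simp add: n_def algebra_simps)
  have "potential (Suc k) = n * (n + 1) / 2 * (norm (F (z (Suc k))))\<^sup>2
          + (n + 1) * inner (F (z (Suc k))) ((z k - z 0) + (z (Suc k) - z k))"
    by (simp add: potential_def n_def algebra_simps)
  also have "\<dots> \<le> (n - 1) * n / 2 * (norm (F (z k)))\<^sup>2 + n * inner (F (z k)) (z k - z 0)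
                  + n * (n + 1) / 2 * (norm (e k))\<^sup>2 - n * inner (F (z k)) (e k)"
    by (rule halpern_potential_decrease[OF _ rec firmly_nonexpansive]) (simp add: n_def)
  also have "(n - 1) * n / 2 * (norm (F (z k)))\<^sup>2 + n * inner (F (z k)) (z k - z 0) = potential k"
    by (simp add: potential_def n_def)
  finally show ?thesis
    using err_sq err_inner by linarith
qed

lemma potential_le_sum:
  "potential k \<le> (\<Sum>j<k. (real j + 1) * (real j + 2) / 2 * (\<delta> j)\<^sup>2
                          + \<delta> j * ((real j + 1) * norm (F (z j))))"
proof (induction k)
  case 0
  then show ?case by (simp add: potential_def)
next
  case (Suc k)
  then show ?case using potential_step[of k] by simp
qed

lemma potential_lower_bound:
  "((real k + 1) * norm (F (z k)))\<^sup>2 / 2 - norm (z 0 - zstar) * ((real k + 1) * norm (F (z k)))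
     \<le> potential k"
proof -
  define a where "a = F (z k)"
  define D where "D = norm (z 0 - zstar)"
  have "(norm a)\<^sup>2 \<le> inner a (z k - zstar)"
    using firmly_nonexpansive[of "z k" zstar] by (simp add: zero a_def)
  moreover have "inner a (z 0 - zstar) \<le> norm a * D"
    unfolding D_def by (rule norm_cauchy_schwarz)
  moreover have "inner a (z k - z 0) = inner a (z k - zstar) - inner a (z 0 - zstar)"
    by (simp add: inner_diff_right)
  ultimately have "(norm a)\<^sup>2 - norm a * D \<le> inner a (z k - z 0)"
    by linarith
  have "((real k + 1) * norm a)\<^sup>2 / 2 - D * ((real k + 1) * norm a)
      \<le> (real k + 1) * (real k + 2) / 2 * (norm a)\<^sup>2 - D * ((real k + 1) * norm a)"
    using mult_right_mono[of "(real k + 1) * (real k + 1)" "(real k + 1) * (real k + 2)"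
        "(norm a)\<^sup>2"]
    by (simp add: power_mult_distrib power2_eq_square mult_ac)
  also have "\<dots> = real k * (real k + 1) / 2 * (norm a)\<^sup>2 + (real k + 1) * ((norm a)\<^sup>2 - norm a * D)"
    by (simp add: algebra_simps)
  also have "\<dots> \<le> real k * (real k + 1) / 2 * (norm a)\<^sup>2 + (real k + 1) * inner a (z k - z 0)"
    using \<open>(norm a)\<^sup>2 - norm a * D \<le> inner a (z k - z 0)\<close> by simp
  also have "\<dots> = potential k"
    by (simp add: potential_def a_def)
  finally show ?thesis
    by (simp add: a_def D_def)
qed

lemma summable_err: "summable \<delta>"
  using err_nonneg err_summable by (rule summable_of_summable_weighted_square)

lemma weighted_err_le_suminf:
  "(\<Sum>j\<in>J. (real j + 1)\<^sup>2 * (\<delta> j)\<^sup>2) \<le> (\<Sum>j. (real j + 1)\<^sup>2 * (\<delta> j)\<^sup>2)" if "finite J"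
  using err_summable that by (rule sum_le_suminf) simp

lemma residual_bound: "\<exists>M. \<forall>k. (real k + 1) * norm (F (z k)) \<le> M"
proof -
  define x where "x k = (real k + 1) * norm (F (z k))" for k
  define S where "S = (\<Sum>j. (real j + 1)\<^sup>2 * (\<delta> j)\<^sup>2)"
  have "S \<ge> 0"
    using weighted_err_le_suminf[of "{}"] by (simp add: S_def)
  have quadratic: "(x k)\<^sup>2 / 2 - norm (z 0 - zstar) * x k \<le> S + (\<Sum>j<k. \<delta> j * x j)" for k
  proof -
    have "(\<Sum>j<k. (real j + 1) * (real j + 2) / 2 * (\<delta> j)\<^sup>2) \<le> (\<Sum>j<k. (real j + 1)\<^sup>2 * (\<delta> j)\<^sup>2)"
      by (intro sum_mono mult_right_mono) (simp_all add: power2_eq_square)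
    also have "\<dots> \<le> S"
      using weighted_err_le_suminf[of "{..<k}"] by (simp add: S_def)
    finally show ?thesis
      using potential_lower_bound[of k] potential_le_sum[of k] by (simp add: x_def sum.distrib)
  qed
  have "x k \<le> 2 * (norm (z 0 - zstar) + suminf \<delta> + S + 1)" for k
    by (rule quadratic_recursive_bound[where \<delta> = \<delta> and E = "suminf \<delta>" and S = S])
      (use quadratic \<open>S \<ge> 0\<close> err_nonneg sum_le_suminf[OF summable_err] in \<open>simp_all add: x_def\<close>)
  then show ?thesis
    unfolding x_def by blast
qed

lemma step_length_bound: "\<exists>C. \<forall>k. (real k + 2) * norm (z (Suc k) - z k) \<le> C"
proof -
  obtain M where M: "\<And>k. (real k + 1) * norm (F (z k)) \<le> M"
    using residual_bound by blast
  define S where "S = (\<Sum>j. (real j + 1)\<^sup>2 * (\<delta> j)\<^sup>2)"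
  define D where "D = norm (z 0 - zstar)"
  have "(real k + 2) * norm (z (Suc k) - z k) \<le> 2 * D + suminf \<delta> + M + (1 + S)" for k
  proof -
    define t where "t = (real k + 1) * \<delta> k"
    have "t\<^sup>2 \<le> S"
      using weighted_err_le_suminf[of "{k}"] by (simp add: S_def t_def power_mult_distrib)
    moreover have "2 * t \<le> t\<^sup>2 + 1"
      using zero_le_power2[of "t - 1"] by (simp add: power2_diff)
    ultimately have "t \<le> 1 + S"
      using zero_le_power2[of t] by linarith
    have "norm (z 0 - z k) \<le> D + norm (z k - zstar)"
      using norm_triangle_ineq4[of "z 0 - zstar" "z k - zstar"] by (simp add: D_def)
    also have "\<dots> \<le> 2 * D + suminf \<delta>"
      using norm_diff_zero_le[of k] sum_le_suminf[OF summable_err, of "{..<k}"] err_nonneg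
      by (simp add: D_def)
    finally have "norm (z 0 - z k) \<le> 2 * D + suminf \<delta>" .
    have "(real k + 1) * norm (e k) \<le> t"
      using err[of k] by (simp add: t_def mult_left_mono)
    have "(real k + 2) * norm (z (Suc k) - z k)
        = norm ((z 0 - z k) - (real k + 1) *\<^sub>R (F (z k) + e k))"
      using arg_cong[OF scaled_step[of k], of norm] by simp
    also have "\<dots> \<le> norm (z 0 - z k) + (real k + 1) * norm (F (z k)) + (real k + 1) * norm (e k)"
      using norm_triangle_ineq4[of "z 0 - z k" "(real k + 1) *\<^sub>R (F (z k) + e k)"]
        mult_left_mono[OF norm_triangle_ineq[of "F (z k)" "e k"], of "real k + 1"]
      by (simp add: distrib_left)
    finally show ?thesis
      using \<open>norm (z 0 - z k) \<le> 2 * D + suminf \<delta>\<close> M[of k] \<open>(real k + 1) * norm (e k) \<le> t\<close>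
        \<open>t \<le> 1 + S\<close> by linarith
  qed
  then show ?thesis by blast
qed

theorem convergence_rate:
  "\<exists>C>0. \<forall>k. norm (F (z k)) \<le> C / (real k + 1) \<and> norm (z (Suc k) - z k) \<le> C / (real k + 1)"
proof -
  obtain M where M: "\<And>k. (real k + 1) * norm (F (z k)) \<le> M"
    using residual_bound by blast
  obtain C where C: "\<And>k. (real k + 2) * norm (z (Suc k) - z k) \<le> C"
    using step_length_bound by blast
  define C' where "C' = max 1 (max M C)"
  have "C' > 0"
    by (simp add: C'_def)
  have "norm (F (z k)) \<le> C' / (real k + 1) \<and> norm (z (Suc k) - z k) \<le> C' / (real k + 1)" for k
  proof
    show "norm (F (z k)) \<le> C' / (real k + 1)"
      using M[of k] by (simp add: C'_def field_simps)
    have "norm (z (Suc k) - z k) \<le> C' / (real k + 2)"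
      using C[of k] by (simp add: C'_def field_simps)
    also have "\<dots> \<le> C' / (real k + 1)"
      using \<open>C' > 0\<close> by (intro divide_left_mono) auto
    finally show "norm (z (Suc k) - z k) \<le> C' / (real k + 1)" .
  qed
  with \<open>C' > 0\<close> show ?thesis by blast
qed

end

lemma inexact_halpern_rescaled:
  fixes G :: "'a::real_inner \<Rightarrow> 'a" and L :: real
  assumes "L > 0" and "co_coercive (1 / L) G" and "G zstar = 0"
    and "summable (\<lambda>k. (real k + 1)\<^sup>2 * (\<gamma> k)\<^sup>2)"
    and "\<And>k. norm (G (z k) - zt k) \<le> \<gamma> k"
    and "\<And>k. z (Suc k) = (1 / (real k + 2)) *\<^sub>R z 0 + (1 - 1 / (real k + 2)) *\<^sub>R z k
                          - ((1 - 1 / (real k + 2)) / L) *\<^sub>R zt k"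
  shows "inexact_halpern (\<lambda>x. (1 / L) *\<^sub>R G x) zstar z
           (\<lambda>k. (1 / L) *\<^sub>R (zt k - G (z k))) (\<lambda>k. \<gamma> k / L)"
proof
  show "co_coercive 1 (\<lambda>x. (1 / L) *\<^sub>R G x)"
    using co_coercive_scaleR[OF assms(2), of "1 / L"] assms(1) by simp
  show "(1 / L) *\<^sub>R G zstar = 0"
    by (simp add: assms(3))
  show "norm ((1 / L) *\<^sub>R (zt k - G (z k))) \<le> \<gamma> k / L" for k
    using assms(5)[of k] assms(1) by (simp add: norm_minus_commute divide_right_mono)
  show "summable (\<lambda>k. (real k + 1)\<^sup>2 * (\<gamma> k / L)\<^sup>2)"
    using summable_divide[OF assms(4), of "L\<^sup>2"] by (simp add: power_divide)
  show "z (Suc k) = (1 / (real k + 2)) *\<^sub>R z 0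
          + (1 - 1 / (real k + 2))
            *\<^sub>R (z k - (1 / L) *\<^sub>R G (z k) - (1 / L) *\<^sub>R (zt k - G (z k)))" for k
    by (simp add: assms(6) scaleR_diff_right)
qed

theorem corollary3:
  fixes G :: "'a::euclidean_space \<Rightarrow> 'a"
    and L :: real and zstar :: 'a
    and \<gamma> :: "nat \<Rightarrow> real"
    and z zt :: "nat \<Rightarrow> 'a"
  assumes L_pos: "L > 0"
    and coco: "co_coercive (1 / L) G"
    and zero: "G zstar = 0"
    and gamma_nonneg: "\<And>k. \<gamma> k \<ge> 0"
    and gamma_sum: "summable (\<lambda>k. (real k + 1)\<^sup>2 * (\<gamma> k)\<^sup>2)"
    and inexact: "\<And>k. norm (G (z k) - zt k) \<le> \<gamma> k"
    and step: "\<And>k. z (Suc k) =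
        (1 / (real k + 2)) *\<^sub>R z 0 + (1 - 1 / (real k + 2)) *\<^sub>R z k
        - ((1 - 1 / (real k + 2)) / L) *\<^sub>R zt k"
  shows "\<exists>C>0. \<forall>k. norm (G (z k)) \<le> C / (real k + 1)
                  \<and> norm (z (Suc k) - z k) \<le> C / (real k + 1)"
proof -
  obtain C where "C > 0" and C: "\<And>k. norm ((1 / L) *\<^sub>R G (z k)) \<le> C / (real k + 1)
                                      \<and> norm (z (Suc k) - z k) \<le> C / (real k + 1)"
    using inexact_halpern.convergence_rate[OF
        inexact_halpern_rescaled[OF L_pos coco zero gamma_sum inexact step]]
    by blast
  have "norm (G (z k)) \<le> (L + 1) * C / (real k + 1)
        \<and> norm (z (Suc k) - z k) \<le> (L + 1) * C / (real k + 1)" for k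
  proof -
    have "norm (G (z k)) \<le> L * C / (real k + 1)"
      using C[of k] L_pos by (simp add: field_simps)
    moreover have "L * C / (real k + 1) \<le> (L + 1) * C / (real k + 1)"
      and "C / (real k + 1) \<le> (L + 1) * C / (real k + 1)"
      using L_pos \<open>C > 0\<close> by (simp_all add: divide_right_mono)
    ultimately show ?thesis
      using C[of k] by linarith
  qed
  moreover have "(L + 1) * C > 0"
    using L_pos \<open>C > 0\<close> by simp
  ultimately show ?thesis by blast
qed

end
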